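(* Let $p$ and $v$ be two distinct points in the plane and let $R$ be a ray emanating from $v$ that does not pass through $p$. Let $c_1,c_2$ be constants with $c_2>c_1>0$. Then the largest value of $|pq|/\max\{|vq|,c_2\}$ over all points $q$ on $R$ with $|pq|>|vq|\geqslant c_1$ is achieved when $|vq|=c_1$ or $|vq|=c_2$.
   Context: $|xy|$ denotes the Euclidean distance between points $x$ and $y$. *)

theory Defs
  imports "HOL-Analysis.Analysis"
begin

text \<open>The ray emanating from v in direction d (d assumed nonzero).\<close>
definition ray :: "real^2 \<Rightarrow> real^2 \<Rightarrow> (real^2) set" where
  "ray v d = {v + t *\<^sub>R d | t. t \<ge> 0}"

end

theory Submission
  imports Defs
begin

text \<open>
  Parametrise the ray by arc length \<open>t = |vq|\<close>. Then \<open>|pq|\<^sup>2 = t\<^sup>2 - 2at + b\<close> is a monic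
  quadratic in \<open>t\<close>. On \<open>[c\<^sub>1, c\<^sub>2]\<close> the denominator is the constant \<open>c\<^sub>2\<close> and the convex
  function \<open>|pq|\<^sup>2\<close> is bounded by its values at the endpoints. Beyond \<open>c\<^sub>2\<close> the ratio \<open>|pq|/t\<close> is
  non-increasing as long as \<open>|pq| > t\<close>, so it is bounded by its value at \<open>c\<^sub>2\<close>.
\<close>

lemma dist_along_unit_vector_sq:
  fixes p v u :: "'a::real_inner"
  assumes "norm u = 1"
  shows "(dist p (v + t *\<^sub>R u))\<^sup>2 = t\<^sup>2 - 2 * inner (p - v) u * t + (dist p v)\<^sup>2"
proof -
  have "p - (v + t *\<^sub>R u) = (p - v) - t *\<^sub>R u" by (simp add: algebra_simps)
  then have "(dist p (v + t *\<^sub>R u))\<^sup>2 = inner ((p - v) - t *\<^sub>R u) ((p - v) - t *\<^sub>R u)"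
    by (simp only: dist_norm power2_norm_eq_inner)
  also have "\<dots> = t\<^sup>2 * inner u u - 2 * inner (p - v) u * t + inner (p - v) (p - v)"
    by (simp add: inner_commute power2_eq_square algebra_simps)
  finally show ?thesis
    using assms by (simp add: dot_square_norm dist_norm)
qed

lemma ray_eq_image_sgn:
  assumes "d \<noteq> 0"
  shows "ray v d = (\<lambda>t. v + t *\<^sub>R sgn d) ` {0..}"
proof (intro equalityI subsetI)
  fix q assume "q \<in> ray v d"
  then obtain s where "s \<ge> 0" "q = v + s *\<^sub>R d" unfolding ray_def by blast
  then have "q = v + (s * norm d) *\<^sub>R sgn d" "s * norm d \<ge> 0"
    using assms by (simp_all add: sgn_div_norm)
  then show "q \<in> (\<lambda>t. v + t *\<^sub>R sgn d) ` {0..}" by force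
next
  fix q assume "q \<in> (\<lambda>t. v + t *\<^sub>R sgn d) ` {0..}"
  then obtain t where "t \<ge> 0" "q = v + t *\<^sub>R sgn d" by auto
  then have "q = v + (t / norm d) *\<^sub>R d" "t / norm d \<ge> 0"
    by (simp_all add: sgn_div_norm divide_inverse)
  then show "q \<in> ray v d" unfolding ray_def by blast
qed

lemma sqrt_monic_quadratic_le_max:
  fixes D :: "real \<Rightarrow> real"
  assumes D_nonneg: "\<And>t. D t \<ge> 0" and D_sq: "\<And>t. (D t)\<^sup>2 = t\<^sup>2 - 2 * a * t + b"
    and "c1 \<le> t" "t \<le> c2"
  shows "D t \<le> max (D c1) (D c2)"
proof -
  have "(c2 - t) * (D c1)\<^sup>2 + (t - c1) * (D c2)\<^sup>2 - (c2 - c1) * (D t)\<^sup>2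
      = (t - c1) * (c2 - t) * (c2 - c1)"
    unfolding D_sq by algebra
  also have "\<dots> \<ge> 0" using assms(3,4) by simp
  finally have "(c2 - c1) * (D t)\<^sup>2 \<le> (c2 - t) * (D c1)\<^sup>2 + (t - c1) * (D c2)\<^sup>2"
    by simp
  also have "\<dots> \<le> (c2 - t) * (max (D c1) (D c2))\<^sup>2 + (t - c1) * (max (D c1) (D c2))\<^sup>2"
    using assms(3,4) D_nonneg
    by (intro add_mono mult_left_mono power_mono) auto
  also have "\<dots> = (c2 - c1) * (max (D c1) (D c2))\<^sup>2" by algebra
  finally have "(D t)\<^sup>2 \<le> (max (D c1) (D c2))\<^sup>2"
    using assms(3,4) by (cases "c1 = c2") (auto simp: mult_le_cancel_left)
  then show ?thesis
    by (rule power2_le_imp_le) (simp add: D_nonneg le_max_iff_disj)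
qed

lemma sqrt_monic_quadratic_ratio_antimono:
  fixes D :: "real \<Rightarrow> real"
  assumes D_nonneg: "\<And>t. D t \<ge> 0" and D_sq: "\<And>t. (D t)\<^sup>2 = t\<^sup>2 - 2 * a * t + b"
    and "0 < c" "c \<le> t" "t < D t"
  shows "D t / t \<le> D c / c"
proof -
  have "b = (D 0)\<^sup>2" using D_sq[of 0] by simp
  then have "b \<ge> 0" by simp
  have "t\<^sup>2 < (D t)\<^sup>2" using assms(3-5) by (intro power_strict_mono) auto
  then have "b - 2 * a * t > 0" unfolding D_sq by simp
  have "(D c * t)\<^sup>2 - (D t * c)\<^sup>2 = (t - c) * (c * (b - 2 * a * t) + b * t)"
    unfolding power_mult_distrib D_sq by algebra
  also have "\<dots> \<ge> 0"
    using assms(3,4) \<open>b \<ge> 0\<close> \<open>b - 2 * a * t > 0\<close>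
    by (intro mult_nonneg_nonneg add_nonneg_nonneg) auto
  finally have "(D t * c)\<^sup>2 \<le> (D c * t)\<^sup>2" by simp
  then have "D t * c \<le> D c * t"
    by (rule power2_le_imp_le) (use D_nonneg assms(3,4) in simp)
  then show ?thesis
    using assms(3,4) by (simp add: divide_simps mult.commute)
qed

lemma sqrt_monic_quadratic_ratio_le_endpoints:
  fixes D :: "real \<Rightarrow> real"
  assumes D_nonneg: "\<And>t. D t \<ge> 0" and D_sq: "\<And>t. (D t)\<^sup>2 = t\<^sup>2 - 2 * a * t + b"
    and "0 < c1" "c1 < c2" "c1 \<le> t" "t < D t"
  shows "D t / max t c2 \<le> max (D c1 / max c1 c2) (D c2 / max c2 c2)"
proof (cases "t \<le> c2")
  case True
  have "D t \<le> max (D c1) (D c2)"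
    by (rule sqrt_monic_quadratic_le_max[OF D_nonneg D_sq]) (use True assms in auto)
  then have "D t / c2 \<le> max (D c1) (D c2) / c2"
    using assms(3,4) by (simp add: divide_right_mono)
  then show ?thesis
    using True assms(3,4) by (simp add: max_divide_distrib_right)
next
  case False
  then have "D t / t \<le> D c2 / c2"
    using assms by (intro sqrt_monic_quadratic_ratio_antimono[OF D_nonneg D_sq]) auto
  then show ?thesis
    using False assms(3,4) by simp
qed

theorem lemma4:
  fixes p v d :: "real^2" and c1 c2 :: real
  assumes "p \<noteq> v" and "d \<noteq> 0" and "p \<notin> ray v d"
    and "0 < c1" and "c1 < c2"
  shows "\<exists>q'\<in>ray v d. (dist v q' = c1 \<or> dist v q' = c2) \<and>
           (\<forall>q\<in>ray v d. dist p q > dist v q \<and> dist v q \<ge> c1 \<longrightarrow>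
              dist p q / max (dist v q) c2 \<le> dist p q' / max (dist v q') c2)"
proof -
  define Q where "Q t = v + t *\<^sub>R sgn d" for t
  define F where "F t = dist p (Q t) / max (dist v (Q t)) c2" for t
  have ray: "ray v d = Q ` {0..}"
    unfolding Q_def using assms(2) by (rule ray_eq_image_sgn)
  have dist_Q: "dist v (Q t) = t" if "t \<ge> 0" for t
    using that assms(2) by (simp add: Q_def dist_norm norm_sgn)
  have Q_sq: "(dist p (Q t))\<^sup>2 = t\<^sup>2 - 2 * inner (p - v) (sgn d) * t + (dist p v)\<^sup>2" for t
    unfolding Q_def using assms(2) by (simp add: dist_along_unit_vector_sq norm_sgn)
  have F_le: "F t \<le> max (F c1) (F c2)" if "c1 \<le> t" "t < dist p (Q t)" for t
    using sqrt_monic_quadratic_ratio_le_endpoints[of "\<lambda>t. dist p (Q t)", OF _ Q_sq assms(4,5) that]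
      that assms(4,5) by (simp add: F_def dist_Q)
  define c where "c = (if F c2 \<le> F c1 then c1 else c2)"
  have "c \<ge> 0" "c = c1 \<or> c = c2" "max (F c1) (F c2) = F c"
    using assms(4,5) by (auto simp: c_def)
  then show ?thesis
    using F_le assms(4,5) unfolding ray
    by (intro bexI[of _ "Q c"]) (auto simp: dist_Q F_def)
qed

end
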